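(* In the setting described in the context, suppose $F$ is strongly convex with respect to $\|\cdot\|_L$ with convexity parameter $\mu>0$. Then $$H(x,T(x))-F^*\leq\gamma_\mu(F(x)-F^* )\qquad\text{for all }x\in\mathrm{dom}\,F,$$ where $\gamma_\mu=1-\frac{\mu}{4}$ if $\mu\leq2$ and $\gamma_\mu=\frac1\mu$ otherwise.
   Context: Let $U\in\mathbf{R}^{N\times N}$ be a column permutation of the $N\times N$ identity matrix, partitioned as $U=[U_1,\dots,U_n]$ with $U_i\in\mathbf{R}^{N\times N_i}$, $\sum_iN_i=N$. For $x\in\mathbf{R}^N$ write $x^{(i)}=U_i^Tx$. Each $\mathbf{R}^{N_i}$ carries the norm $\|t\|_{(i)}=\langle B_it,t\rangle^{1/2}$ and dual norm $\|t\|_{(i)}^*=\langle B_i^{-1}t,t\rangle^{1/2}$ with $B_i$ positive definite. Consider minimizing $F(x)=f(x)+\Psi(x)$ over $\mathbf{R}^N$, where $f$ is convex and differentiable with $\|\nabla_if(x+U_it)-\nabla_if(x)\|_{(i)}^*\leq L_i\|t\|_{(i)}$ for all $x,t,i$ (constants $L_i>0$, $\nabla_if(x)=U_i^T\nabla f(x)$), and $\Psi(x)=\sum_i\Psi_i(x^{(i)})$ with each $\Psi_i$ proper closed convex. The problem has a minimizer; $F^*$ is the optimal value. Let $\|x\|_L=(\sum_iL_i\|x^{(i)}\|_{(i)}^2)^{1/2}$. $F$ is strongly convex w.r.t. a norm $\|\cdot\|$ with parameter $\mu>0$ if $F(x)\geq F(y)+\langle F'(y),x-y\rangle+\frac\mu2\|x-y\|^2$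 for all $x,y\in\mathrm{dom}\,F$ and every subgradient $F'(y)$ of $F$ at $y$. Define $T^{(i)}(x)=\arg\min_{t\in\mathbf{R}^{N_i}}\{\langle\nabla_if(x),t\rangle+\frac{L_i}{2}\|t\|_{(i)}^2+\Psi_i(x^{(i)}+t)\}$, $T(x)=\sum_iU_iT^{(i)}(x)$, and $H(x,T)=f(x)+\langle\nabla f(x),T\rangle+\frac12\|T\|_L^2+\Psi(x+T)$. *)

theory Defs
  imports "HOL-Analysis.Analysis"
begin

text \<open>Coordinates of R^N are indexed by the finite type 'n; the column permutation
  U = [U_1,...,U_n] is encoded by the block map blk :: 'n => 'b (coordinate j belongs
  to block blk j). The space R^{N_i} is identified with the subspace of vectors
  supported on block i, and U_i^T x with the coordinate projection onto that block.\<close>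

definition blkspace :: "('n \<Rightarrow> 'b) \<Rightarrow> 'b \<Rightarrow> (real^'n) set" where
  "blkspace blk i = {t. \<forall>j. blk j \<noteq> i \<longrightarrow> t $ j = 0}"

definition blkproj :: "('n \<Rightarrow> 'b) \<Rightarrow> 'b \<Rightarrow> real^'n \<Rightarrow> real^'n" where
  "blkproj blk i x = (\<chi> j. if blk j = i then x $ j else 0)"

definition blk_posdef :: "('n \<Rightarrow> 'b) \<Rightarrow> 'b \<Rightarrow> real^'n^'n \<Rightarrow> bool" where
  "blk_posdef blk i M \<longleftrightarrow>
     (\<forall>j k. (blk j \<noteq> i \<or> blk k \<noteq> i) \<longrightarrow> M $ j $ k = 0) \<and>
     transpose M = M \<and>
     (\<forall>t\<in>blkspace blk i. t \<noteq> 0 \<longrightarrow> t \<bullet> (M *v t) > 0)"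

definition blknorm :: "('b \<Rightarrow> real^'n^'n) \<Rightarrow> 'b \<Rightarrow> real^'n \<Rightarrow> real" where
  "blknorm B i t = sqrt (t \<bullet> (B i *v t))"

definition blkinv :: "('n \<Rightarrow> 'b) \<Rightarrow> ('b \<Rightarrow> real^'n^'n) \<Rightarrow> 'b \<Rightarrow> real^'n \<Rightarrow> real^'n" where
  "blkinv blk B i t = (THE s. s \<in> blkspace blk i \<and> B i *v s = t)"

definition dualnorm :: "('n \<Rightarrow> 'b) \<Rightarrow> ('b \<Rightarrow> real^'n^'n) \<Rightarrow> 'b \<Rightarrow> real^'n \<Rightarrow> real" where
  "dualnorm blk B i t = sqrt (t \<bullet> blkinv blk B i t)"

definition normL :: "('n \<Rightarrow> 'b::finite) \<Rightarrow> ('b \<Rightarrow> real^'n^'n) \<Rightarrow> ('b \<Rightarrow> real) \<Rightarrow> real^'n \<Rightarrow> real" where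
  "normL blk B L x = sqrt (\<Sum>i\<in>UNIV. L i * (blknorm B i (blkproj blk i x))\<^sup>2)"

definition proper_closed_convex_on :: "(real^'n) set \<Rightarrow> (real^'n \<Rightarrow> ereal) \<Rightarrow> bool" where
  "proper_closed_convex_on V g \<longleftrightarrow>
     (\<forall>x\<in>V. g x \<noteq> -\<infinity>) \<and> (\<exists>x\<in>V. g x < \<infinity>) \<and>
     closed {(x, r::real). x \<in> V \<and> g x \<le> ereal r} \<and>
     (\<forall>x\<in>V. \<forall>y\<in>V. \<forall>u::real. 0 < u \<and> u < 1 \<longrightarrow>
        g (u *\<^sub>R x + (1 - u) *\<^sub>R y) \<le> ereal u * g x + ereal (1 - u) * g y)"

definition Psi :: "('n \<Rightarrow> 'b::finite) \<Rightarrow> ('b \<Rightarrow> real^'n \<Rightarrow> ereal) \<Rightarrow> real^'n \<Rightarrow> ereal" where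
  "Psi blk Ps x = (\<Sum>i\<in>UNIV. Ps i (blkproj blk i x))"

definition Fobj :: "(real^'n \<Rightarrow> real) \<Rightarrow> ('n \<Rightarrow> 'b::finite) \<Rightarrow> ('b \<Rightarrow> real^'n \<Rightarrow> ereal) \<Rightarrow> real^'n \<Rightarrow> ereal" where
  "Fobj f blk Ps x = ereal (f x) + Psi blk Ps x"

definition is_subgrad :: "(real^'n \<Rightarrow> ereal) \<Rightarrow> real^'n \<Rightarrow> real^'n \<Rightarrow> bool" where
  "is_subgrad F y g \<longleftrightarrow> (\<forall>z. F y + ereal (g \<bullet> (z - y)) \<le> F z)"

definition strongly_convex_wrt :: "(real^'n \<Rightarrow> real) \<Rightarrow> (real^'n \<Rightarrow> ereal) \<Rightarrow> real \<Rightarrow> bool" where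
  "strongly_convex_wrt nrm F mu \<longleftrightarrow>
     (\<forall>x y g. F x < \<infinity> \<longrightarrow> F y < \<infinity> \<longrightarrow> is_subgrad F y g \<longrightarrow>
        F y + ereal (g \<bullet> (x - y)) + ereal (mu / 2 * (nrm (x - y))\<^sup>2) \<le> F x)"

definition Tblk :: "('n \<Rightarrow> 'b) \<Rightarrow> ('b \<Rightarrow> real^'n^'n) \<Rightarrow> ('b \<Rightarrow> real) \<Rightarrow> (real^'n \<Rightarrow> real^'n)
      \<Rightarrow> ('b \<Rightarrow> real^'n \<Rightarrow> ereal) \<Rightarrow> 'b \<Rightarrow> real^'n \<Rightarrow> real^'n" where
  "Tblk blk B L gf Ps i x =
     (let obj = (\<lambda>t. ereal (blkproj blk i (gf x) \<bullet> t + L i / 2 * (blknorm B i t)\<^sup>2)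
                     + Ps i (blkproj blk i x + t))
      in SOME t. t \<in> blkspace blk i \<and> (\<forall>s\<in>blkspace blk i. obj t \<le> obj s))"

definition Tmap :: "('n \<Rightarrow> 'b::finite) \<Rightarrow> ('b \<Rightarrow> real^'n^'n) \<Rightarrow> ('b \<Rightarrow> real) \<Rightarrow> (real^'n \<Rightarrow> real^'n)
      \<Rightarrow> ('b \<Rightarrow> real^'n \<Rightarrow> ereal) \<Rightarrow> real^'n \<Rightarrow> real^'n" where
  "Tmap blk B L gf Ps x = (\<Sum>i\<in>UNIV. Tblk blk B L gf Ps i x)"

definition Hfun :: "(real^'n \<Rightarrow> real) \<Rightarrow> (real^'n \<Rightarrow> real^'n) \<Rightarrow> ('n \<Rightarrow> 'b::finite) \<Rightarrow> ('b \<Rightarrow> real^'n^'n)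
      \<Rightarrow> ('b \<Rightarrow> real) \<Rightarrow> ('b \<Rightarrow> real^'n \<Rightarrow> ereal) \<Rightarrow> real^'n \<Rightarrow> real^'n \<Rightarrow> ereal" where
  "Hfun f gf blk B L Ps x T =
     ereal (f x + gf x \<bullet> T + 1/2 * (normL blk B L T)\<^sup>2) + Psi blk Ps (x + T)"

definition gamma_mu :: "real \<Rightarrow> real" where
  "gamma_mu mu = (if mu \<le> 2 then 1 - mu / 4 else 1 / mu)"

end

theory Submission
  imports Defs
begin

text \<open>Since \<open>T(x)\<close> minimises \<open>H(x,\<cdot>)\<close> block by block and \<open>H(x,\<cdot>)\<close> is block separable,
  \<open>H(x,T(x)) \<le> H(x,t)\<close> for every \<open>t\<close>. Take \<open>t = u(x\<^sup>* - x)\<close> towards a minimiser \<open>x\<^sup>*\<close>: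
  by the gradient inequality and convexity of \<open>F\<close>,
  \<open>H(x,t) \<le> (1 - u) F(x) + u F\<^sup>* + u\<^sup>2/2 \<parallel>x - x\<^sup>*\<parallel>\<^sub>L\<^sup>2\<close>, and strong convexity at the
  minimiser gives \<open>\<mu>/2 \<parallel>x - x\<^sup>*\<parallel>\<^sub>L\<^sup>2 \<le> F(x) - F\<^sup>*\<close>. Choosing \<open>u = min(\<mu>/2, 1)\<close> yields
  the factor \<open>\<gamma>\<^sub>\<mu>\<close>. The only analytic work is showing that the block subproblems defining
  \<open>T\<^sup>(\<^sup>i\<^sup>)(x)\<close> have minimisers, which holds by coercivity and closedness of the epigraphs.\<close>

lemma subspace_blkspace: "subspace (blkspace blk i)"
  unfolding subspace_def blkspace_def by auto

lemma closed_blkspace: "closed (blkspace blk i)"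
  by (rule closed_subspace[OF subspace_blkspace])

lemma blkproj_in_blkspace: "blkproj blk i x \<in> blkspace blk i"
  unfolding blkproj_def blkspace_def by auto

lemma blkproj_add: "blkproj blk i (x + y) = blkproj blk i x + blkproj blk i y"
  unfolding blkproj_def by vector

lemma blkproj_scaleR: "blkproj blk i (c *\<^sub>R x) = c *\<^sub>R blkproj blk i x"
  unfolding blkproj_def by vector

lemma blkproj_sum:
  assumes "\<And>i. t i \<in> blkspace blk i"
  shows "blkproj blk j (\<Sum>i\<in>(UNIV::'b::finite set). t i) = t j"
proof -
  have "blkproj blk j (\<Sum>i\<in>(UNIV::'b set). t i) $ k = t j $ k" for k
  proof (cases "blk k = j")
    case True
    have "(\<Sum>i\<in>UNIV. t i $ k) = (\<Sum>i\<in>UNIV. if i = j then t j $ k else 0)"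
      using assms True by (intro sum.cong) (auto simp: blkspace_def)
    then show ?thesis using True unfolding blkproj_def sum_component by simp
  next
    case False
    then show ?thesis using assms[of j] unfolding blkproj_def blkspace_def by auto
  qed
  then show ?thesis by (simp add: vec_eq_iff)
qed

lemma inner_eq_sum_blkproj:
  "(a::real^'n) \<bullet> t = (\<Sum>i\<in>(UNIV::'b::finite set). blkproj blk i a \<bullet> blkproj blk i t)"
proof -
  have "(\<Sum>i\<in>(UNIV::'b set). blkproj blk i a \<bullet> blkproj blk i t)
      = (\<Sum>i\<in>(UNIV::'b set). \<Sum>j\<in>UNIV. if blk j = i then a $ j * t $ j else 0)"
    unfolding inner_vec_def blkproj_def by (auto intro!: sum.cong)
  also have "\<dots> = (\<Sum>j\<in>UNIV. \<Sum>i\<in>(UNIV::'b set). if blk j = i then a $ j * t $ j else 0)"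
    by (rule sum.swap)
  finally show ?thesis by (simp add: inner_vec_def)
qed

lemma quadratic_form_scaleR:
  "(c *\<^sub>R (t::real^'n)) \<bullet> (M *v (c *\<^sub>R t)) = c\<^sup>2 * (t \<bullet> (M *v t))"
  by (simp only: matrix_vector_mult_scaleR inner_scaleR_left inner_scaleR_right
      power2_eq_square mult.assoc)

lemma blk_posdef_nonneg:
  "blk_posdef blk i M \<Longrightarrow> t \<in> blkspace blk i \<Longrightarrow> 0 \<le> t \<bullet> (M *v t)"
  unfolding blk_posdef_def by (cases "t = 0") (auto intro: less_imp_le)

lemma blknorm_power2:
  "blk_posdef blk i (B i) \<Longrightarrow> t \<in> blkspace blk i \<Longrightarrow> (blknorm B i t)\<^sup>2 = t \<bullet> (B i *v t)"
  unfolding blknorm_def using blk_posdef_nonneg by simp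

lemma normL_power2:
  assumes "\<And>i. L i > 0"
  shows "(normL blk B L x)\<^sup>2 = (\<Sum>i\<in>UNIV. L i * (blknorm B i (blkproj blk i x))\<^sup>2)"
proof -
  have "0 \<le> (\<Sum>i\<in>UNIV. L i * (blknorm B i (blkproj blk i x))\<^sup>2)"
    using assms by (intro sum_nonneg) (simp add: less_imp_le)
  then show ?thesis unfolding normL_def by simp
qed

lemma normL_scaleR_power2:
  assumes "\<And>i. L i > 0" "\<And>i. blk_posdef blk i (B i)"
  shows "(normL blk B L (c *\<^sub>R x))\<^sup>2 = c\<^sup>2 * (normL blk B L x)\<^sup>2"
proof -
  have "(blknorm B i (blkproj blk i (c *\<^sub>R x)))\<^sup>2 = c\<^sup>2 * (blknorm B i (blkproj blk i x))\<^sup>2" for i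
    using assms(2) blknorm_power2[of blk i B] blkproj_in_blkspace[of blk i] subspace_blkspace[of blk i]
    by (simp only: blkproj_scaleR quadratic_form_scaleR subspace_scale)
  then show ?thesis unfolding normL_power2[OF assms(1)]
    by (simp add: sum_distrib_left algebra_simps)
qed

text \<open>On the finite-dimensional block subspace, positivity of the quadratic form on the unit
  sphere is uniform by compactness.\<close>
lemma blk_posdef_coercive:
  assumes "blk_posdef blk i M"
  obtains c where "c > 0" "\<And>t. t \<in> blkspace blk i \<Longrightarrow> c * (norm t)\<^sup>2 \<le> t \<bullet> (M *v t)"
proof (cases "blkspace blk i \<inter> sphere 0 1 = {}")
  case True
  have "t = 0" if "t \<in> blkspace blk i" for t
  proof (rule ccontr)
    assume "t \<noteq> 0"
    then have "(1 / norm t) *\<^sub>R t \<in> blkspace blk i \<inter> sphere 0 1"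
      using that subspace_blkspace[of blk i] by (simp add: subspace_scale)
    with True show False by blast
  qed
  show ?thesis
  proof (rule that[of 1])
    fix t assume "t \<in> blkspace blk i"
    then have "t = 0" by fact
    then show "1 * (norm t)\<^sup>2 \<le> t \<bullet> (M *v t)" by simp
  qed simp
next
  case False
  let ?S = "blkspace blk i \<inter> sphere 0 1"
  have cS: "compact ?S"
    by (intro closed_Int_compact closed_blkspace compact_sphere)
  have "continuous_on ?S (\<lambda>t. t \<bullet> (M *v t))"
    by (intro continuous_intros matrix_vector_mult_linear_continuous_on[unfolded eta_contract_eq])
  then obtain u where u: "u \<in> ?S" "\<And>y. y \<in> ?S \<Longrightarrow> u \<bullet> (M *v u) \<le> y \<bullet> (M *v y)"
    using continuous_attains_inf[OF cS False] by blast
  show ?thesis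
  proof (rule that)
    show "u \<bullet> (M *v u) > 0"
      using u(1) assms unfolding blk_posdef_def by auto
  next
    fix t assume t: "t \<in> blkspace blk i"
    show "u \<bullet> (M *v u) * (norm t)\<^sup>2 \<le> t \<bullet> (M *v t)"
    proof (cases "t = 0")
      case False
      let ?v = "(1 / norm t) *\<^sub>R t"
      have "?v \<in> ?S"
        using t False subspace_blkspace[of blk i] by (simp add: subspace_scale)
      then have "u \<bullet> (M *v u) * (norm t)\<^sup>2 \<le> (?v \<bullet> (M *v ?v)) * (norm t)\<^sup>2"
        by (intro mult_right_mono u(2)) simp_all
      moreover have "t = norm t *\<^sub>R ?v" using False by simp
      then have "t \<bullet> (M *v t) = (norm t)\<^sup>2 * (?v \<bullet> (M *v ?v))"
        by (metis quadratic_form_scaleR)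
      ultimately show ?thesis by (simp only: mult.commute)
    qed simp
  qed
qed

text \<open>A closed epigraph makes the function lower semicontinuous, so a sequence in K with values
  tending to \<open>-\<infinity>\<close> would have a cluster point where the function is \<open>-\<infinity>\<close>.\<close>
lemma closed_epigraph_bounded_below_on_compact:
  fixes g :: "'a::metric_space \<Rightarrow> ereal"
  assumes cl: "closed {(x, r::real). x \<in> V \<and> g x \<le> ereal r}"
    and ninf: "\<And>x. x \<in> V \<Longrightarrow> g x \<noteq> -\<infinity>"
    and K: "compact K" "K \<subseteq> V"
  obtains m where "\<And>y. y \<in> K \<Longrightarrow> ereal m < g y"
proof -
  have "\<exists>n::nat. \<forall>y\<in>K. ereal (- real n) < g y"
  proof (rule ccontr)
    assume "\<not> ?thesis"
    then have "\<forall>n. \<exists>y. y \<in> K \<and> g y \<le> ereal (- real n)"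
      by (auto simp: not_less)
    then obtain ys where ys: "\<And>n. ys n \<in> K" "\<And>n. g (ys n) \<le> ereal (- real n)"
      by metis
    obtain l r where lr: "l \<in> K" "strict_mono r" "(ys \<circ> r) \<longlonglongrightarrow> l"
      using compact_imp_seq_compact[OF K(1)] ys(1) unfolding seq_compact_def by metis
    have "g l \<le> ereal \<rho>" for \<rho>
    proof -
      obtain N :: nat where N: "- \<rho> \<le> real N" using real_arch_simple by blast
      have "\<forall>\<^sub>F n in sequentially. ((ys \<circ> r) n, \<rho>) \<in> {(x, r::real). x \<in> V \<and> g x \<le> ereal r}"
        unfolding eventually_sequentially
      proof (intro exI[of _ N] allI impI)
        fix n assume "N \<le> n"
        then have "ereal (- real (r n)) \<le> ereal \<rho>"
          using N seq_suble[OF lr(2), of n] by simp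
        then have "g (ys (r n)) \<le> ereal \<rho>" using ys(2)[of "r n"] by (rule order_trans[rotated])
        then show "((ys \<circ> r) n, \<rho>) \<in> {(x, r::real). x \<in> V \<and> g x \<le> ereal r}"
          using ys(1)[of "r n"] K(2) by auto
      qed
      from Lim_in_closed_set[OF cl this _ tendsto_Pair[OF lr(3) tendsto_const]]
      show ?thesis by simp
    qed
    then have "g l = -\<infinity>" by (rule ereal_bot)
    then show False using ninf lr(1) K(2) by blast
  qed
  then show ?thesis using that by blast
qed

text \<open>Convexity propagates a lower bound on the unit ball around a point of finite value to an
  affine-in-norm minorant on the whole space.\<close>
lemma proper_closed_convex_on_norm_minorant:
  fixes g :: "real^'n \<Rightarrow> ereal"
  assumes pcc: "proper_closed_convex_on V g" and V: "subspace V" "closed V"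
  obtains m b where "\<And>y. y \<in> V \<Longrightarrow> ereal (m - b * norm y) \<le> g y"
proof -
  from pcc have ninf: "\<And>y. y \<in> V \<Longrightarrow> g y \<noteq> -\<infinity>"
    and ex: "\<exists>y\<in>V. g y < \<infinity>"
    and cl: "closed {(x, r::real). x \<in> V \<and> g x \<le> ereal r}"
    and cvx: "\<And>x y u. x \<in> V \<Longrightarrow> y \<in> V \<Longrightarrow> 0 < u \<Longrightarrow> u < 1 \<Longrightarrow>
        g (u *\<^sub>R x + (1 - u) *\<^sub>R y) \<le> ereal u * g x + ereal (1 - u) * g y"
    unfolding proper_closed_convex_on_def by blast+
  from ex obtain y0 where y0: "y0 \<in> V" "g y0 < \<infinity>" by blast
  then obtain P0 where gy0: "g y0 = ereal P0" using ninf by (cases "g y0") auto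
  let ?K = "V \<inter> cball y0 1"
  obtain m where mK: "\<And>y. y \<in> ?K \<Longrightarrow> ereal m < g y"
    using closed_epigraph_bounded_below_on_compact[OF cl ninf, of ?K]
      closed_Int_compact[OF V(2) compact_cball] by blast
  have mP: "m < P0" using mK[of y0] y0 gy0 by simp
  have bnd: "ereal (m - (P0 - m) * norm (y - y0)) \<le> g y" if y: "y \<in> V" for y
  proof (cases "norm (y - y0) \<le> 1")
    case True
    then have "ereal m < g y" using y by (intro mK) (simp add: dist_norm norm_minus_commute)
    moreover have "m - (P0 - m) * norm (y - y0) \<le> m" using mP by simp
    ultimately show ?thesis by (meson ereal_less_eq(3) less_imp_le order_trans)
  next
    case False
    define d where "d = norm (y - y0)"
    have d1: "d > 1" using False d_def by simp
    show ?thesis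
    proof (cases "g y")
      case (real Y)
      define s where "s = 1 / d"
      have s: "0 < s" "s < 1" using d1 unfolding s_def by auto
      define z where "z = s *\<^sub>R y + (1 - s) *\<^sub>R y0"
      have "z \<in> V" unfolding z_def
        using V(1) y y0(1) by (intro subspace_add subspace_scale) auto
      moreover have "y0 - z = s *\<^sub>R (y0 - y)" unfolding z_def by (simp add: algebra_simps)
      then have "norm (y0 - z) = 1"
        using s d1 by (simp add: s_def d_def norm_minus_commute)
      ultimately have "ereal m < g z" by (intro mK) (simp add: dist_norm)
      also have "g z \<le> ereal s * g y + ereal (1 - s) * g y0"
        unfolding z_def by (rule cvx[OF y y0(1) s])
      also have "\<dots> = ereal (s * Y + (1 - s) * P0)" using real gy0 by simp
      finally have "m < s * Y + (1 - s) * P0" by simp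
      then have "m * d < Y + (d - 1) * P0" using d1 unfolding s_def by (simp add: field_simps)
      then have "m - (P0 - m) * d \<le> Y" using d1 mP by (simp add: algebra_simps)
      then show ?thesis using real d_def by simp
    qed (use ninf[OF y] in simp_all)
  qed
  show ?thesis
  proof (rule that[of "m - (P0 - m) * norm y0" "P0 - m"])
    fix y assume y: "y \<in> V"
    have "(P0 - m) * norm (y - y0) \<le> (P0 - m) * (norm y + norm y0)"
      using mP norm_triangle_ineq4[of y y0] by (intro mult_left_mono) simp_all
    then have "m - (P0 - m) * norm y0 - (P0 - m) * norm y \<le> m - (P0 - m) * norm (y - y0)"
      by (simp add: algebra_simps)
    then show "ereal (m - (P0 - m) * norm y0 - (P0 - m) * norm y) \<le> g y"
      using bnd[OF y] order_trans ereal_less_eq(3) by blast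
  qed
qed

lemma quadratic_sublevel_bound:
  fixes c b d R x :: real
  assumes c: "c > 0" and x: "x \<ge> 0" and h: "c * x\<^sup>2 - b * x - d \<le> R"
  shows "x \<le> (\<bar>b\<bar> + \<bar>d\<bar> + \<bar>R\<bar>) / c + 1"
proof (rule ccontr)
  let ?M = "\<bar>b\<bar> + \<bar>d\<bar> + \<bar>R\<bar>"
  assume "\<not> x \<le> ?M / c + 1"
  then have "?M / c < x - 1" by simp
  moreover have "0 \<le> ?M / c" using c by simp
  ultimately have x1: "x > 1" by linarith
  have "?M < (x - 1) * c"
    using \<open>?M / c < x - 1\<close> pos_divide_less_eq[OF c] by blast
  then have "?M < x * c" using c by (simp add: algebra_simps)
  then have "?M * x < (c * x) * x" using x1 by (simp add: mult.commute)
  moreover have "\<bar>b\<bar> * x + \<bar>d\<bar> + \<bar>R\<bar> \<le> ?M * x"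
    using x1 mult_left_mono[of 1 x "\<bar>d\<bar>"] mult_left_mono[of 1 x "\<bar>R\<bar>"]
    by (simp add: distrib_right)
  moreover have "b * x \<le> \<bar>b\<bar> * x" using x by (simp add: mult_right_mono)
  ultimately show False using h by (simp add: power2_eq_square)
qed

text \<open>The truncated epigraph is compact, and a point of it with least height gives the minimum.\<close>
lemma closed_epigraph_coercive_attains_inf:
  fixes \<phi> :: "'a::euclidean_space \<Rightarrow> ereal"
  assumes cl: "closed {(t, r::real). t \<in> V \<and> \<phi> t \<le> ereal r}"
    and lb: "\<And>t. t \<in> V \<Longrightarrow> ereal (c * (norm t)\<^sup>2 - b * norm t - d) \<le> \<phi> t"
    and c: "c > 0"
    and t0: "t0 \<in> V" "\<phi> t0 < \<infinity>"
  shows "\<exists>t\<in>V. \<forall>s\<in>V. \<phi> t \<le> \<phi> s"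
proof -
  obtain R where R: "\<phi> t0 = ereal R" using t0 lb[OF t0(1)] by (cases "\<phi> t0") auto
  define E where "E = {(t, r::real). t \<in> V \<and> \<phi> t \<le> ereal r} \<inter> {p. snd p \<le> R}"
  have "closed E" unfolding E_def
    by (intro closed_Int cl closed_Collect_le continuous_on_snd continuous_on_id continuous_on_const)
  moreover have "bounded E" unfolding bounded_iff
  proof
    define K where "K = (\<bar>b\<bar> + \<bar>d\<bar> + \<bar>R\<bar>) / c + 1"
    show "\<forall>p\<in>E. norm p \<le> K + \<bar>R\<bar> + \<bar>b\<bar> * K + \<bar>d\<bar>"
    proof
      fix p assume "p \<in> E"
      then obtain t r where p: "p = (t, r)" "t \<in> V" "\<phi> t \<le> ereal r" "r \<le> R"
        unfolding E_def by auto
      have h: "c * (norm t)\<^sup>2 - b * norm t - d \<le> r"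
        using order_trans[OF lb[OF p(2)] p(3)] by simp
      then have nt: "norm t \<le> K" unfolding K_def using p(4) c
        by (intro quadratic_sublevel_bound) auto
      have "b * norm t \<le> \<bar>b\<bar> * K"
        using nt by (meson abs_ge_self abs_ge_zero mult_mono norm_ge_zero order_trans mult_right_mono)
      moreover have "0 \<le> c * (norm t)\<^sup>2" "0 \<le> \<bar>b\<bar> * K"
        using c unfolding K_def by simp_all
      ultimately have "\<bar>r\<bar> \<le> \<bar>R\<bar> + \<bar>b\<bar> * K + \<bar>d\<bar>" using h p(4) by linarith
      then show "norm p \<le> K + \<bar>R\<bar> + \<bar>b\<bar> * K + \<bar>d\<bar>"
        using nt norm_Pair_le[of t r] unfolding p(1) by simp
    qed
  qed
  ultimately have "compact (snd ` E)"
    by (intro compact_continuous_image continuous_intros) (simp add: compact_eq_bounded_closed)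
  moreover have "(t0, R) \<in> E" unfolding E_def using t0 R by simp
  ultimately obtain rs where rs: "rs \<in> snd ` E" "\<And>r. r \<in> snd ` E \<Longrightarrow> rs \<le> r"
    using compact_attains_inf[of "snd ` E"] by blast
  then obtain ts where ts: "ts \<in> V" "\<phi> ts \<le> ereal rs" "rs \<le> R" unfolding E_def by auto
  have "\<phi> ts \<le> \<phi> s" if s: "s \<in> V" for s
  proof (cases "\<phi> s \<le> ereal R")
    case True
    then obtain S where S: "\<phi> s = ereal S" using lb[OF s] by (cases "\<phi> s") auto
    then have "(s, S) \<in> E" unfolding E_def using s True by simp
    then have "rs \<le> S" using rs(2) by force
    then show ?thesis using ts(2) S by (simp add: order_trans)
  next
    case False
    then show ?thesis using ts(2,3) by (meson ereal_less_eq(3) linear order_trans)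
  qed
  then show ?thesis using ts(1) by blast
qed

lemma closed_epigraph_add_shift:
  fixes g :: "'a::real_normed_vector \<Rightarrow> ereal"
  assumes V: "subspace V" "z \<in> V"
    and cl: "closed {(y, r::real). y \<in> V \<and> g y \<le> ereal r}"
    and q: "continuous_on UNIV q"
  shows "closed {(t, r::real). t \<in> V \<and> ereal (q t) + g (z + t) \<le> ereal r}"
proof -
  have mem: "z + t \<in> V \<longleftrightarrow> t \<in> V" for t
    using V subspace_add[OF V(1), of z t] subspace_diff[OF V(1), of "z + t" z] by auto
  have le: "ereal (q t) + g (z + t) \<le> ereal r \<longleftrightarrow> g (z + t) \<le> ereal (r - q t)" for t r
    by (cases "g (z + t)") (simp_all add: algebra_simps)
  have "{(t, r::real). t \<in> V \<and> ereal (q t) + g (z + t) \<le> ereal r}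
      = (\<lambda>p. (z + fst p, snd p - q (fst p))) -` {(y, r::real). y \<in> V \<and> g y \<le> ereal r}"
    by (auto simp: mem le)
  also have "closed \<dots>"
  proof (rule closed_vimage[OF cl])
    have "continuous_on UNIV (\<lambda>p::'a \<times> real. q (fst p))"
      by (rule continuous_on_compose2[OF q continuous_on_fst[OF continuous_on_id]]) auto
    then show "continuous_on UNIV (\<lambda>p::'a \<times> real. (z + fst p, snd p - q (fst p)))"
      by (intro continuous_intros)
  qed
  finally show ?thesis .
qed

text \<open>\<open>Tblk\<close> is defined by Hilbert choice, so it is a minimiser only once one exists. The
  objective has a closed epigraph and grows quadratically, since \<open>B\<^sub>i\<close> is coercive and
  \<open>\<Psi>\<^sub>i\<close> has an affine minorant.\<close>
lemma block_subproblem_attains_inf: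
  fixes a z :: "real^'n"
  assumes Bpd: "blk_posdef blk i (B i)" and l: "l > 0"
    and pcc: "proper_closed_convex_on (blkspace blk i) g"
    and z: "z \<in> blkspace blk i"
  shows "\<exists>t\<in>blkspace blk i. \<forall>s\<in>blkspace blk i.
           ereal (a \<bullet> t + l / 2 * (blknorm B i t)\<^sup>2) + g (z + t)
         \<le> ereal (a \<bullet> s + l / 2 * (blknorm B i s)\<^sup>2) + g (z + s)"
proof -
  let ?V = "blkspace blk i"
  define q where "q = (\<lambda>t. a \<bullet> t + l / 2 * (blknorm B i t)\<^sup>2)"
  have "continuous_on UNIV q"
    unfolding q_def blknorm_def
    by (intro continuous_intros matrix_vector_mult_linear_continuous_on[unfolded eta_contract_eq])
  then have cl: "closed {(t, r::real). t \<in> ?V \<and> ereal (q t) + g (z + t) \<le> ereal r}"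
    using pcc unfolding proper_closed_convex_on_def
    by (intro closed_epigraph_add_shift subspace_blkspace z) blast+
  obtain c where c: "c > 0" "\<And>t. t \<in> ?V \<Longrightarrow> c * (norm t)\<^sup>2 \<le> t \<bullet> (B i *v t)"
    using blk_posdef_coercive[OF Bpd] by blast
  obtain m b where mb: "\<And>y. y \<in> ?V \<Longrightarrow> ereal (m - b * norm y) \<le> g y"
    using proper_closed_convex_on_norm_minorant[OF pcc subspace_blkspace closed_blkspace] by blast
  have lb: "ereal (l / 2 * c * (norm t)\<^sup>2 - (norm a + \<bar>b\<bar>) * norm t - (\<bar>b\<bar> * norm z - m))
      \<le> ereal (q t) + g (z + t)" if t: "t \<in> ?V" for t
  proof -
    have "- (norm a * norm t) \<le> a \<bullet> t" using Cauchy_Schwarz_ineq2[of a t] by linarith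
    moreover have "l / 2 * (c * (norm t)\<^sup>2) \<le> l / 2 * (blknorm B i t)\<^sup>2"
      using c(2)[OF t] blknorm_power2[of blk i B, OF Bpd t] l by (intro mult_left_mono) simp_all
    ultimately have "l / 2 * c * (norm t)\<^sup>2 - norm a * norm t \<le> q t"
      unfolding q_def by (simp add: mult.assoc)
    moreover have "ereal (m - \<bar>b\<bar> * (norm z + norm t)) \<le> g (z + t)"
    proof -
      have "m - \<bar>b\<bar> * (norm z + norm t) \<le> m - b * norm (z + t)"
        using norm_triangle_ineq[of z t]
        by (smt (verit) abs_ge_self abs_ge_zero mult_left_mono mult_right_mono norm_ge_zero)
      then have "ereal (m - \<bar>b\<bar> * (norm z + norm t)) \<le> ereal (m - b * norm (z + t))"
        by simp
      also have "\<dots> \<le> g (z + t)"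
        using t z by (intro mb subspace_add[OF subspace_blkspace])
      finally show ?thesis .
    qed
    ultimately have "ereal (l / 2 * c * (norm t)\<^sup>2 - norm a * norm t)
        + ereal (m - \<bar>b\<bar> * (norm z + norm t)) \<le> ereal (q t) + g (z + t)"
      by (intro add_mono) (simp_all add: order_trans)
    then show ?thesis by (simp add: algebra_simps)
  qed
  obtain y1 where y1: "y1 \<in> ?V" "g y1 < \<infinity>"
    using pcc unfolding proper_closed_convex_on_def by blast
  have "y1 - z \<in> ?V" by (rule subspace_diff[OF subspace_blkspace y1(1) z])
  moreover have "ereal (q (y1 - z)) + g (z + (y1 - z)) < \<infinity>" using y1(2) by simp
  moreover have "l / 2 * c > 0" using l c(1) by simp
  ultimately show ?thesis
    using closed_epigraph_coercive_attains_inf[OF cl lb] unfolding q_def by blast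
qed

lemma Tblk_minimizes:
  assumes "blk_posdef blk i (B i)" "L i > 0"
    and "proper_closed_convex_on (blkspace blk i) (Ps i)"
  shows "Tblk blk B L gf Ps i x \<in> blkspace blk i"
    and "s \<in> blkspace blk i \<Longrightarrow>
      ereal (blkproj blk i (gf x) \<bullet> Tblk blk B L gf Ps i x
             + L i / 2 * (blknorm B i (Tblk blk B L gf Ps i x))\<^sup>2)
        + Ps i (blkproj blk i x + Tblk blk B L gf Ps i x)
      \<le> ereal (blkproj blk i (gf x) \<bullet> s + L i / 2 * (blknorm B i s)\<^sup>2) + Ps i (blkproj blk i x + s)"
  using someI_ex[OF block_subproblem_attains_inf[where blk = blk and i = i and B = B
        and a = "blkproj blk i (gf x)" and z = "blkproj blk i x",
        OF assms blkproj_in_blkspace, unfolded Bex_def]]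
  unfolding Tblk_def Let_def by blast+

lemma convex_on_has_derivative_above_tangent:
  fixes f :: "'a::real_normed_vector \<Rightarrow> real"
  assumes f: "convex_on UNIV f" and D: "(f has_derivative D) (at x)"
  shows "f x + D h \<le> f (x + h)"
proof -
  define g where "g = (\<lambda>s::real. f (x + s *\<^sub>R h))"
  have convex: "convex_on UNIV g"
  proof (rule convex_onI)
    fix a b t :: real assume t: "0 < t" "t < 1"
    have "x + ((1 - t) *\<^sub>R a + t *\<^sub>R b) *\<^sub>R h = (1 - t) *\<^sub>R (x + a *\<^sub>R h) + t *\<^sub>R (x + b *\<^sub>R h)"
      by (simp add: algebra_simps)
    then show "g ((1 - t) *\<^sub>R a + t *\<^sub>R b) \<le> (1 - t) * g a + t * g b"
      unfolding g_def using convex_onD[OF f, of t] t by simp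
  qed simp
  have "((\<lambda>s. x + s *\<^sub>R h) has_derivative (\<lambda>s. s *\<^sub>R h)) (at 0)"
    by (auto intro!: derivative_eq_intros)
  moreover have "(f has_derivative D) (at (x + 0 *\<^sub>R h))" using D by simp
  ultimately have "(g has_derivative (\<lambda>s. D (s *\<^sub>R h))) (at 0)"
    unfolding g_def by (rule has_derivative_compose)
  moreover have "(\<lambda>s. D (s *\<^sub>R h)) = (*) (D h)"
    using D by (simp add: fun_eq_iff has_derivative_linear linear_scale)
  ultimately have "(g has_field_derivative D h) (at 0)"
    unfolding has_field_derivative_def by simp
  then have "g 1 - g 0 \<ge> D h * (1 - 0)"
    by (intro convex_on_imp_above_tangent[OF convex]) auto
  then show ?thesis unfolding g_def by simp
qed

lemma Fobj_finiteD:
  assumes Fy: "Fobj f blk Ps y < \<infinity>"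
    and pcc: "\<And>i. proper_closed_convex_on (blkspace blk i) (Ps i)"
  obtains p where "\<And>i. Ps i (blkproj blk i y) = ereal (p i)"
    and "Fobj f blk Ps y = ereal (f y + sum p UNIV)"
proof -
  have "Ps i (blkproj blk i y) \<noteq> -\<infinity>" for i
    using pcc[of i] blkproj_in_blkspace[of blk i y] unfolding proper_closed_convex_on_def by blast
  moreover have "Ps i (blkproj blk i y) \<noteq> \<infinity>" for i
    using Fy sum_Pinfty[of "\<lambda>i. Ps i (blkproj blk i y)" UNIV] unfolding Fobj_def Psi_def by auto
  ultimately have fin: "Ps i (blkproj blk i y) = ereal (real_of_ereal (Ps i (blkproj blk i y)))" for i
    by (cases "Ps i (blkproj blk i y)") auto
  show ?thesis
  proof (rule that[OF fin])
    show "Fobj f blk Ps y = ereal (f y + (\<Sum>i\<in>UNIV. real_of_ereal (Ps i (blkproj blk i y))))"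
      unfolding Fobj_def Psi_def by (subst fin) (simp add: sum_ereal)
  qed
qed

lemma Fobj_convex_combination:
  assumes f: "convex_on UNIV f"
    and pcc: "\<And>i. proper_closed_convex_on (blkspace blk i) (Ps i)"
    and Fx: "Fobj f blk Ps x = ereal a" and Fy: "Fobj f blk Ps y = ereal b"
    and u: "0 < u" "u \<le> 1"
  shows "Fobj f blk Ps ((1 - u) *\<^sub>R x + u *\<^sub>R y) \<le> ereal ((1 - u) * a + u * b)"
proof -
  obtain p where p: "\<And>i. Ps i (blkproj blk i x) = ereal (p i)" "a = f x + sum p UNIV"
    using Fobj_finiteD[OF _ pcc, of f x] Fx by auto
  obtain q where q: "\<And>i. Ps i (blkproj blk i y) = ereal (q i)" "b = f y + sum q UNIV"
    using Fobj_finiteD[OF _ pcc, of f y] Fy by auto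
  let ?z = "(1 - u) *\<^sub>R x + u *\<^sub>R y"
  have "Ps i (blkproj blk i ?z) \<le> ereal ((1 - u) * p i + u * q i)" for i
  proof (cases "u = 1")
    case False
    have "blkproj blk i ?z = u *\<^sub>R blkproj blk i y + (1 - u) *\<^sub>R blkproj blk i x"
      by (simp add: blkproj_add blkproj_scaleR add.commute)
    moreover have "Ps i (u *\<^sub>R blkproj blk i y + (1 - u) *\<^sub>R blkproj blk i x)
        \<le> ereal u * Ps i (blkproj blk i y) + ereal (1 - u) * Ps i (blkproj blk i x)"
      using pcc[of i] blkproj_in_blkspace[of blk i] u False unfolding proper_closed_convex_on_def by simp
    ultimately show ?thesis using p(1) q(1) by (simp add: add.commute)
  qed (simp add: q(1))
  then have "Psi blk Ps ?z \<le> (\<Sum>i\<in>UNIV. ereal ((1 - u) * p i + u * q i))"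
    unfolding Psi_def by (rule sum_mono)
  moreover have "f ?z \<le> (1 - u) * f x + u * f y"
    using u by (intro convex_onD[OF f]) auto
  ultimately have "Fobj f blk Ps ?z
      \<le> ereal ((1 - u) * f x + u * f y) + (\<Sum>i\<in>UNIV. ereal ((1 - u) * p i + u * q i))"
    unfolding Fobj_def by (intro add_mono) simp_all
  also have "\<dots> = ereal ((1 - u) * f x + u * f y + ((1 - u) * sum p UNIV + u * sum q UNIV))"
    by (simp add: sum_ereal sum.distrib sum_distrib_left)
  also have "\<dots> = ereal ((1 - u) * a + u * b)"
    by (simp add: p(2) q(2) algebra_simps)
  finally show ?thesis .
qed

lemma Hfun_eq_sum_blocks:
  assumes "\<And>i. L i > 0"
  shows "Hfun f gf blk B L Ps x t = ereal (f x) + (\<Sum>i\<in>UNIV.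
      ereal (blkproj blk i (gf x) \<bullet> blkproj blk i t + L i / 2 * (blknorm B i (blkproj blk i t))\<^sup>2)
      + Ps i (blkproj blk i x + blkproj blk i t))"
proof -
  define q where "q i = blkproj blk i (gf x) \<bullet> blkproj blk i t
      + L i / 2 * (blknorm B i (blkproj blk i t))\<^sup>2" for i
  define P where "P i = Ps i (blkproj blk i x + blkproj blk i t)" for i
  have "1/2 * (normL blk B L t)\<^sup>2 = (\<Sum>i\<in>UNIV. L i / 2 * (blknorm B i (blkproj blk i t))\<^sup>2)"
    unfolding normL_power2[OF assms] sum_distrib_left by (rule sum.cong) simp_all
  then have "gf x \<bullet> t + 1/2 * (normL blk B L t)\<^sup>2 = sum q UNIV"
    unfolding q_def inner_eq_sum_blkproj[of "gf x" t blk] by (simp only: sum.distrib)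
  moreover have "Psi blk Ps (x + t) = sum P UNIV"
    unfolding Psi_def blkproj_add P_def ..
  ultimately have "Hfun f gf blk B L Ps x t = ereal (f x) + (ereal (sum q UNIV) + sum P UNIV)"
    unfolding Hfun_def by (simp only: add.assoc plus_ereal.simps(1)[symmetric])
  also have "\<dots> = ereal (f x) + (\<Sum>i\<in>UNIV. ereal (q i) + P i)"
    by (simp only: sum_ereal[symmetric] sum.distrib)
  finally show ?thesis unfolding q_def P_def .
qed

lemma Hfun_Tmap_le:
  assumes "\<And>i. blk_posdef blk i (B i)" "\<And>i. L i > 0"
    and "\<And>i. proper_closed_convex_on (blkspace blk i) (Ps i)"
  shows "Hfun f gf blk B L Ps x (Tmap blk B L gf Ps x) \<le> Hfun f gf blk B L Ps x t"
proof -
  have T: "blkproj blk i (Tmap blk B L gf Ps x) = Tblk blk B L gf Ps i x" for i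
    unfolding Tmap_def using Tblk_minimizes(1)[OF assms] by (rule blkproj_sum)
  show ?thesis
    unfolding Hfun_eq_sum_blocks[OF assms(2)] T
    by (intro add_left_mono sum_mono Tblk_minimizes(2)[OF assms blkproj_in_blkspace])
qed

lemma Hfun_le_Fobj:
  assumes "convex_on UNIV f" "(f has_derivative (\<lambda>h. gf x \<bullet> h)) (at x)"
  shows "Hfun f gf blk B L Ps x t \<le> Fobj f blk Ps (x + t) + ereal (1/2 * (normL blk B L t)\<^sup>2)"
proof -
  have "f x + gf x \<bullet> t \<le> f (x + t)"
    using convex_on_has_derivative_above_tangent[OF assms] .
  then have "Hfun f gf blk B L Ps x t
      \<le> (ereal (f (x + t)) + ereal (1/2 * (normL blk B L t)\<^sup>2)) + Psi blk Ps (x + t)"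
    unfolding Hfun_def by (intro add_right_mono) simp
  also have "\<dots> = Fobj f blk Ps (x + t) + ereal (1/2 * (normL blk B L t)\<^sup>2)"
    unfolding Fobj_def by (simp only: ac_simps)
  finally show ?thesis .
qed

lemma strongly_convex_wrt_min_growth:
  assumes "strongly_convex_wrt nrm F mu" "\<And>y. F xs \<le> F y" "F x < \<infinity>"
  shows "F xs + ereal (mu / 2 * (nrm (x - xs))\<^sup>2) \<le> F x"
proof -
  have "is_subgrad F xs 0" unfolding is_subgrad_def using assms(2) by simp
  then show ?thesis
    using assms le_less_trans[OF assms(2)[of x] assms(3)]
    unfolding strongly_convex_wrt_def by fastforce
qed

text \<open>The step \<open>u\<close> minimises \<open>(1 - u) E + u\<^sup>2 D / 2\<close> over \<open>0 < u \<le> 1\<close> after bounding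
  \<open>D \<le> 2 E / \<mu>\<close>.\<close>
lemma gamma_mu_bound:
  fixes mu D E :: real
  assumes "mu > 0" "mu / 2 * D \<le> E"
  obtains u where "0 < u" "u \<le> 1" "(1 - u) * E + u\<^sup>2 / 2 * D \<le> gamma_mu mu * E"
proof (cases "mu \<le> 2")
  case True
  have "mu / 4 * (mu / 2 * D) \<le> mu / 4 * E"
    using assms by (intro mult_left_mono) simp_all
  then have "(1 - mu / 2) * E + (mu / 2)\<^sup>2 / 2 * D \<le> gamma_mu mu * E"
    using True by (simp add: gamma_mu_def power2_eq_square algebra_simps)
  then show ?thesis using True assms(1) by (intro that[of "mu / 2"]) simp_all
next
  case False
  have "1 / mu * (mu / 2 * D) \<le> 1 / mu * E"
    using assms by (intro mult_left_mono) simp_all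
  then have "(1 - 1) * E + 1\<^sup>2 / 2 * D \<le> gamma_mu mu * E"
    using False assms(1) by (simp add: gamma_mu_def)
  then show ?thesis by (intro that[of 1]) simp_all
qed

theorem lemma5:
  fixes f :: "real^'n \<Rightarrow> real"
    and gf :: "real^'n \<Rightarrow> real^'n"
    and blk :: "'n \<Rightarrow> 'b::finite"
    and B :: "'b \<Rightarrow> real^'n^'n"
    and L :: "'b \<Rightarrow> real"
    and Ps :: "'b \<Rightarrow> real^'n \<Rightarrow> ereal"
    and mu :: real
    and x :: "real^'n"
  assumes B_pd: "\<And>i. blk_posdef blk i (B i)"
    and f_convex: "convex_on UNIV f"
    and f_grad: "\<And>y. (f has_derivative (\<lambda>h. gf y \<bullet> h)) (at y)"
    and L_pos: "\<And>i. L i > 0"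
    and f_lip: "\<And>i y t. t \<in> blkspace blk i \<Longrightarrow>
        dualnorm blk B i (blkproj blk i (gf (y + t)) - blkproj blk i (gf y)) \<le> L i * blknorm B i t"
    and Psi_pcc: "\<And>i. proper_closed_convex_on (blkspace blk i) (Ps i)"
    and has_min: "\<exists>xs. \<forall>y. Fobj f blk Ps xs \<le> Fobj f blk Ps y"
    and mu_pos: "mu > 0"
    and strong: "strongly_convex_wrt (normL blk B L) (Fobj f blk Ps) mu"
    and x_dom: "Fobj f blk Ps x < \<infinity>"
  shows "Hfun f gf blk B L Ps x (Tmap blk B L gf Ps x) - (INF y. Fobj f blk Ps y)
           \<le> ereal (gamma_mu mu) * (Fobj f blk Ps x - (INF y. Fobj f blk Ps y))"
proof -
  let ?F = "Fobj f blk Ps"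
  obtain xs where xs: "\<And>y. ?F xs \<le> ?F y" using has_min by blast
  then have INF: "(INF y. ?F y) = ?F xs" by (intro INF_eqI) auto
  obtain a where Fx: "?F x = ereal a" using Fobj_finiteD[OF x_dom Psi_pcc] by metis
  obtain b where Fxs: "?F xs = ereal b"
    using Fobj_finiteD[OF le_less_trans[OF xs x_dom] Psi_pcc] by metis
  define D where "D = (normL blk B L (x - xs))\<^sup>2"
  have "b + mu / 2 * D \<le> a"
    using strongly_convex_wrt_min_growth[OF strong xs x_dom] unfolding Fx Fxs D_def by simp
  then obtain u where u: "0 < u" "u \<le> 1"
    and bound: "(1 - u) * (a - b) + u\<^sup>2 / 2 * D \<le> gamma_mu mu * (a - b)"
    using gamma_mu_bound[OF mu_pos, of D "a - b"] by auto
  define t where "t = (- u) *\<^sub>R (x - xs)"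
  have xt: "x + t = (1 - u) *\<^sub>R x + u *\<^sub>R xs" unfolding t_def by (simp add: algebra_simps)
  have "Hfun f gf blk B L Ps x (Tmap blk B L gf Ps x) \<le> Hfun f gf blk B L Ps x t"
    by (rule Hfun_Tmap_le[OF B_pd L_pos Psi_pcc])
  also have "\<dots> \<le> ?F ((1 - u) *\<^sub>R x + u *\<^sub>R xs) + ereal (1/2 * (normL blk B L t)\<^sup>2)"
    using Hfun_le_Fobj[where gf = gf and x = x and t = t, OF f_convex f_grad] unfolding xt .
  also have "\<dots> \<le> ereal ((1 - u) * a + u * b) + ereal (u\<^sup>2 / 2 * D)"
    using Fobj_convex_combination[OF f_convex Psi_pcc Fx Fxs u]
    unfolding t_def normL_scaleR_power2[OF L_pos B_pd] D_def by (intro add_mono) simp_all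
  also have "\<dots> \<le> ereal b + ereal (gamma_mu mu * (a - b))"
    using bound by (simp add: algebra_simps)
  finally show ?thesis
    unfolding INF Fx Fxs by (cases "Hfun f gf blk B L Ps x (Tmap blk B L gf Ps x)") simp_all
qed

end
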